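(* Let $f:\mathbb{R}^m\to\mathbb{R}$ be $L$-smooth, and let $\nabla f_\xi(\cdot)$ satisfy $\mathbb{E}_\xi[\nabla f_\xi(x)]=\nabla f(x)$ and $\mathbb{E}_\xi\|\nabla f_\xi(x)-\nabla f(x)\|^2\le\rho^2$ for all $x$. Let $t\ge1$, $x_0\in\mathbb{R}^m$ fixed, and $x_{s+1}=x_s-\gamma\nabla f_{\xi_s}(x_s)$ for $s=0,\dots,t-1$, with each $\xi_s$ drawn independently of $\xi_0,\dots,\xi_{s-1}$, and $0<\gamma\le\frac{1}{L(t-1)}$ (no restriction when $t=1$). Then $$\mathbb{E}\big[\|x_0-x_t\|^2\big]\le\gamma^2\,\mathbb{E}\Big[\Big\|\sum_{s=0}^{t-1}\nabla f(x_s)\Big\|^2\Big]+\gamma^2t\rho^2+(t-1)t(t+1)\gamma^3L\rho^2.$$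
   Context: $f$ is $L$-smooth means $\nabla f$ is $L$-Lipschitz. *)

theory Defs
  imports "HOL-Analysis.Analysis" "HOL-Probability.Probability"
begin

definition L_smooth :: "real \<Rightarrow> ('a::euclidean_space \<Rightarrow> real) \<Rightarrow> ('a \<Rightarrow> 'a) \<Rightarrow> bool" where
  "L_smooth L f g \<longleftrightarrow> (\<forall>x. GDERIV f x :> g x) \<and> (\<forall>x y. norm (g x - g y) \<le> L * norm (x - y))"

text \<open>SGD iterates: x_0 = x0, x_{s+1} = x_s - gamma * G x_s (omega s),
  where omega s is the sample xi_s and G x xi is the stochastic gradient.\<close>
fun sgd_iter :: "'a::real_vector \<Rightarrow> real \<Rightarrow> ('a \<Rightarrow> 'b \<Rightarrow> 'a) \<Rightarrow> (nat \<Rightarrow> 'b) \<Rightarrow> nat \<Rightarrow> 'a" where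
  "sgd_iter x0 \<gamma> G \<omega> 0 = x0"
| "sgd_iter x0 \<gamma> G \<omega> (Suc s) =
     sgd_iter x0 \<gamma> G \<omega> s - \<gamma> *\<^sub>R G (sgd_iter x0 \<gamma> G \<omega> s) (\<omega> s)"

end

theory Submission
  imports Defs
begin

text \<open>
  Write \<open>e\<^sub>s = G x\<^sub>s \<xi>\<^sub>s - g x\<^sub>s\<close> for the gradient noise, so that
  \<open>x\<^sub>0 - x\<^sub>t = \<gamma> (S + E)\<close> with \<open>S = \<Sum>\<^sub>s g x\<^sub>s\<close> and \<open>E = \<Sum>\<^sub>s e\<^sub>s\<close>.
  The noise terms have conditional mean zero given the past, hence are orthogonal and
  \<open>\<EE>\<parallel>E\<parallel>\<^sup>2 \<le> t \<rho>\<^sup>2\<close>; likewise \<open>\<EE>\<langle>g x\<^sub>s, e\<^sub>r\<rangle> = 0\<close> for \<open>s \<le> r\<close>.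
  For \<open>r < s\<close>, replace \<open>x\<^sub>s\<close> by the point \<open>c\<close> reached from \<open>x\<^sub>r\<close> after \<open>s - r\<close> noiseless
  gradient steps: \<open>c\<close> is determined by \<open>\<xi>\<^sub>0, \<dots>, \<xi>\<^sub>r\<^sub>-\<^sub>1\<close>, so \<open>\<EE>\<langle>g c, e\<^sub>r\<rangle> = 0\<close>, and a
  discrete Gronwall estimate with \<open>(1 + \<gamma>L)\<^sup>t\<^sup>-\<^sup>1 \<le> e \<le> 3\<close> gives
  \<open>\<parallel>x\<^sub>s - c\<parallel> \<le> 3\<gamma> \<Sum>\<^sub>j \<parallel>e\<^sub>r\<^sub>+\<^sub>j\<parallel>\<close>. Hence \<open>\<EE>\<langle>g x\<^sub>s, e\<^sub>r\<rangle> \<le> 3L\<gamma>(s - r)\<rho>\<^sup>2\<close>, and summing over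
  \<open>r < s < t\<close> yields the cubic term.
\<close>

subsection \<open>Deterministic estimates\<close>

lemma L_smooth_lipschitz:
  fixes g :: "'a::euclidean_space \<Rightarrow> 'a"
  assumes "L_smooth L f g"
  shows "L-lipschitz_on UNIV g"
proof (rule lipschitz_onI)
  have lip: "norm (g x - g y) \<le> L * norm (x - y)" for x y
    using assms unfolding L_smooth_def by blast
  then show "dist (g x) (g y) \<le> L * dist x y" for x y
    by (simp add: dist_norm)
  obtain b :: 'a where "b \<in> Basis"
    using nonempty_Basis by blast
  then have "0 < norm b"
    by auto
  moreover have "0 \<le> L * norm (b - 0)"
    using lip[of b 0] norm_ge_zero order_trans by blast
  ultimately show "0 \<le> L"
    by (simp add: zero_le_mult_iff)
qed

lemma one_plus_power_le_3:
  fixes a :: real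
  assumes "0 \<le> a" and "real p * a \<le> 1"
  shows "(1 + a) ^ p \<le> 3"
proof -
  have "(1 + a) ^ p \<le> exp a ^ p"
    using assms(1) by (intro power_mono) (auto simp: exp_ge_add_one_self)
  also have "\<dots> = exp (real p * a)"
    by (simp add: exp_of_nat_mult)
  also have "\<dots> \<le> exp 1"
    using assms(2) by simp
  also have "\<dots> \<le> 3"
    by (rule exp_le)
  finally show ?thesis .
qed

lemma sum_lessThan_diff_eq: "2 * (\<Sum>r<s. real (s - r)) = real s * (real s + 1)"
proof (induction s)
  case (Suc s)
  have "(\<Sum>r<Suc s. real (Suc s - r)) = (\<Sum>r<s. real (s - r)) + real s + 1"
    unfolding sum.lessThan_Suc by (auto simp: Suc_diff_le sum.distrib simp del: of_nat_diff)
  with Suc.IH show ?case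
    by (simp add: algebra_simps del: of_nat_diff)
qed simp

lemma sum_sum_lessThan_diff_eq: "6 * (\<Sum>s<n. \<Sum>r<s. real (s - r)) = (real n - 1) * real n * (real n + 1)"
proof (induction n)
  case (Suc n)
  have "6 * (\<Sum>s<Suc n. \<Sum>r<s. real (s - r))
        = 6 * (\<Sum>s<n. \<Sum>r<s. real (s - r)) + 3 * (2 * (\<Sum>r<n. real (n - r)))"
    by simp
  with Suc.IH show ?case
    by (simp only: sum_lessThan_diff_eq) (simp add: algebra_simps)
qed simp

lemma perturbed_gradient_descent_dist:
  fixes x e :: "nat \<Rightarrow> 'a::real_normed_vector" and g :: "'a \<Rightarrow> 'a"
  assumes lip: "L-lipschitz_on UNIV g" and \<gamma>: "0 \<le> \<gamma>"
    and step: "\<And>k. x (Suc k) = x k - \<gamma> *\<^sub>R (g (x k) + e k)"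
  shows "norm (x m - ((\<lambda>z. z - \<gamma> *\<^sub>R g z) ^^ m) (x 0))
           \<le> \<gamma> * (\<Sum>j<m. (1 + \<gamma> * L) ^ (m - 1 - j) * norm (e j))"
proof (induction m)
  case (Suc m)
  define y where "y = ((\<lambda>z. z - \<gamma> *\<^sub>R g z) ^^ m) (x 0)"
  define a where "a = 1 + \<gamma> * L"
  have "0 \<le> a"
    using lipschitz_on_nonneg[OF lip] \<gamma> by (simp add: a_def)
  have "norm (x (Suc m) - ((\<lambda>z. z - \<gamma> *\<^sub>R g z) ^^ Suc m) (x 0))
        = norm ((x m - y) - \<gamma> *\<^sub>R (g (x m) - g y) - \<gamma> *\<^sub>R e m)"
    by (simp add: step y_def algebra_simps)
  also have "\<dots> \<le> norm (x m - y) + \<gamma> * norm (g (x m) - g y) + \<gamma> * norm (e m)"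
    using \<gamma> norm_triangle_ineq4 by (smt (verit) norm_scaleR)
  also have "\<dots> \<le> a * norm (x m - y) + \<gamma> * norm (e m)"
    using mult_left_mono[OF lipschitz_on_normD[OF lip, of "x m" y] \<gamma>]
    by (simp add: a_def algebra_simps)
  also have "\<dots> \<le> a * (\<gamma> * (\<Sum>j<m. a ^ (m - 1 - j) * norm (e j))) + \<gamma> * norm (e m)"
    using Suc.IH \<open>0 \<le> a\<close> by (simp add: y_def a_def mult_left_mono)
  also have "\<dots> = \<gamma> * (\<Sum>j<Suc m. a ^ (Suc m - 1 - j) * norm (e j))"
  proof -
    have "a * (\<Sum>j<m. a ^ (m - 1 - j) * norm (e j)) = (\<Sum>j<m. a ^ (Suc m - 1 - j) * norm (e j))"
      unfolding sum_distrib_left by (intro sum.cong) (auto simp: Suc_diff_Suc simp flip: power_Suc)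
    then show ?thesis
      by (simp add: algebra_simps)
  qed
  finally show ?case
    unfolding a_def .
qed simp

subsection \<open>Square-integrable random vectors\<close>

definition square_integrable :: "'a measure \<Rightarrow> ('a \<Rightarrow> 'b::real_normed_vector) \<Rightarrow> bool" where
  "square_integrable M h \<longleftrightarrow> h \<in> borel_measurable M \<and> integrable M (\<lambda>w. (norm (h w))\<^sup>2)"

lemma square_integrable_inner:
  fixes A B :: "'a \<Rightarrow> 'b::euclidean_space"
  assumes "square_integrable M A" and "square_integrable M B"
  shows "integrable M (\<lambda>w. A w \<bullet> B w)"
proof (rule Bochner_Integration.integrable_bound)
  show "integrable M (\<lambda>w. ((norm (A w))\<^sup>2 + (norm (B w))\<^sup>2) / 2)"
    using assms unfolding square_integrable_def by auto
  show "(\<lambda>w. A w \<bullet> B w) \<in> borel_measurable M"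
    using assms unfolding square_integrable_def by (auto intro: borel_measurable_inner)
  have "\<bar>A w \<bullet> B w\<bar> \<le> ((norm (A w))\<^sup>2 + (norm (B w))\<^sup>2) / 2" for w
    using Cauchy_Schwarz_ineq2[of "A w" "B w"] sum_squares_bound[of "norm (A w)" "norm (B w)"]
    by (simp add: power2_eq_square)
  then show "AE w in M. norm (A w \<bullet> B w) \<le> norm (((norm (A w))\<^sup>2 + (norm (B w))\<^sup>2) / 2)"
    by simp
qed

lemma square_integrable_add:
  fixes A B :: "'a \<Rightarrow> 'b::euclidean_space"
  assumes "square_integrable M A" and "square_integrable M B"
  shows "square_integrable M (\<lambda>w. A w + B w)"
  unfolding square_integrable_def
proof
  show "(\<lambda>w. A w + B w) \<in> borel_measurable M"
    using assms unfolding square_integrable_def by (auto intro: borel_measurable_add)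
  show "integrable M (\<lambda>w. (norm (A w + B w))\<^sup>2)"
  proof (rule Bochner_Integration.integrable_bound)
    show "integrable M (\<lambda>w. 2 * (norm (A w))\<^sup>2 + 2 * (norm (B w))\<^sup>2)"
      using assms unfolding square_integrable_def by auto
    have "(norm (A w + B w))\<^sup>2 \<le> 2 * (norm (A w))\<^sup>2 + 2 * (norm (B w))\<^sup>2" for w
    proof -
      have "(norm (A w + B w))\<^sup>2 \<le> (norm (A w) + norm (B w))\<^sup>2"
        by (simp add: norm_triangle_ineq power_mono)
      also have "\<dots> \<le> 2 * (norm (A w))\<^sup>2 + 2 * (norm (B w))\<^sup>2"
        using sum_squares_bound[of "norm (A w)" "norm (B w)"] by (simp add: power2_eq_square algebra_simps)
      finally show ?thesis .
    qed
    then show "AE w in M. norm ((norm (A w + B w))\<^sup>2) \<le> norm (2 * (norm (A w))\<^sup>2 + 2 * (norm (B w))\<^sup>2)"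
      by simp
  qed (use \<open>(\<lambda>w. A w + B w) \<in> borel_measurable M\<close> in measurable)
qed

lemma square_integrable_scaleR:
  assumes "square_integrable M A"
  shows "square_integrable M (\<lambda>w. c *\<^sub>R A w)"
  using assms unfolding square_integrable_def by (auto simp: power_mult_distrib)

lemma square_integrable_diff:
  fixes A B :: "'a \<Rightarrow> 'b::euclidean_space"
  assumes "square_integrable M A" and "square_integrable M B"
  shows "square_integrable M (\<lambda>w. A w - B w)"
  using square_integrable_add[OF assms(1) square_integrable_scaleR[OF assms(2), of "-1"]] by simp

lemma square_integrable_sum:
  fixes A :: "_ \<Rightarrow> 'a \<Rightarrow> 'b::euclidean_space"
  assumes "\<And>i. i \<in> I \<Longrightarrow> square_integrable M (A i)"
  shows "square_integrable M (\<lambda>w. \<Sum>i\<in>I. A i w)"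
  using assms
proof (induction I rule: infinite_finite_induct)
  case (insert i I)
  then show ?case
    by (simp add: square_integrable_add)
qed (simp_all add: square_integrable_def)

lemma (in finite_measure) square_integrable_lipschitz_comp:
  fixes g :: "'b::euclidean_space \<Rightarrow> 'c::euclidean_space"
  assumes lip: "L-lipschitz_on UNIV g" and h: "square_integrable M h"
  shows "square_integrable M (\<lambda>w. g (h w))"
  unfolding square_integrable_def
proof
  have "g \<in> borel_measurable borel"
    using lipschitz_on_continuous_on[OF lip] by (rule borel_measurable_continuous_onI)
  then show m: "(\<lambda>w. g (h w)) \<in> borel_measurable M"
    using h unfolding square_integrable_def by (auto intro: measurable_compose)
  show "integrable M (\<lambda>w. (norm (g (h w)))\<^sup>2)"
  proof (rule Bochner_Integration.integrable_bound)
    show "integrable M (\<lambda>w. 2 * (norm (g 0))\<^sup>2 + 2 * L\<^sup>2 * (norm (h w))\<^sup>2)"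
      using h unfolding square_integrable_def by auto
    have "(norm (g (h w)))\<^sup>2 \<le> 2 * (norm (g 0))\<^sup>2 + 2 * L\<^sup>2 * (norm (h w))\<^sup>2" for w
    proof -
      have "norm (g (h w)) \<le> norm (g 0) + L * norm (h w)"
        using norm_triangle_sub[of "g (h w)" "g 0"] lipschitz_on_normD[OF lip, of "h w" 0] by simp
      then have "(norm (g (h w)))\<^sup>2 \<le> (norm (g 0) + L * norm (h w))\<^sup>2"
        by (simp add: power_mono)
      also have "\<dots> \<le> 2 * (norm (g 0))\<^sup>2 + 2 * L\<^sup>2 * (norm (h w))\<^sup>2"
        using sum_squares_bound[of "norm (g 0)" "L * norm (h w)"]
        by (simp add: power2_eq_square algebra_simps)
      finally show ?thesis .
    qed
    then show "AE w in M. norm ((norm (g (h w)))\<^sup>2) \<le> norm (2 * (norm (g 0))\<^sup>2 + 2 * L\<^sup>2 * (norm (h w))\<^sup>2)"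
      by simp
  qed (use m in measurable)
qed

lemma integral_inner_sum_sum:
  fixes A B :: "_ \<Rightarrow> _ \<Rightarrow> 'b::euclidean_space"
  assumes "finite I" "finite J"
    and A: "\<And>i. i \<in> I \<Longrightarrow> square_integrable M (A i)"
    and B: "\<And>j. j \<in> J \<Longrightarrow> square_integrable M (B j)"
  shows "(\<integral>w. (\<Sum>i\<in>I. A i w) \<bullet> (\<Sum>j\<in>J. B j w) \<partial>M) = (\<Sum>i\<in>I. \<Sum>j\<in>J. \<integral>w. A i w \<bullet> B j w \<partial>M)"
proof -
  have int: "integrable M (\<lambda>w. A i w \<bullet> B j w)" if "i \<in> I" "j \<in> J" for i j
    using A B that by (intro square_integrable_inner)
  have "(\<integral>w. (\<Sum>i\<in>I. A i w) \<bullet> (\<Sum>j\<in>J. B j w) \<partial>M) = (\<integral>w. (\<Sum>i\<in>I. \<Sum>j\<in>J. A i w \<bullet> B j w) \<partial>M)"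
    by (simp only: inner_sum_left) (simp only: inner_sum_right)
  also have "\<dots> = (\<Sum>i\<in>I. \<integral>w. (\<Sum>j\<in>J. A i w \<bullet> B j w) \<partial>M)"
    using int by (intro Bochner_Integration.integral_sum Bochner_Integration.integrable_sum) auto
  also have "\<dots> = (\<Sum>i\<in>I. \<Sum>j\<in>J. \<integral>w. A i w \<bullet> B j w \<partial>M)"
    using int by (intro sum.cong refl Bochner_Integration.integral_sum) auto
  finally show ?thesis .
qed

subsection \<open>Stochastic gradient descent with independent samples\<close>

locale sgd_setting =
  fixes g :: "'a::euclidean_space \<Rightarrow> 'a" and D :: "'b measure" and G :: "'a \<Rightarrow> 'b \<Rightarrow> 'a"
    and L \<rho> \<gamma> :: real and t :: nat and x0 :: 'a
  assumes lipschitz: "L-lipschitz_on UNIV g"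
    and D: "prob_space D"
    and G_meas: "(\<lambda>(x, \<xi>). G x \<xi>) \<in> borel_measurable (borel \<Otimes>\<^sub>M D)"
    and G_int: "\<And>x. integrable D (G x)"
    and unbiased: "\<And>x. (\<integral>\<xi>. G x \<xi> \<partial>D) = g x"
    and var_int: "\<And>x. integrable D (\<lambda>\<xi>. (norm (G x \<xi> - g x))\<^sup>2)"
    and var_bound: "\<And>x. (\<integral>\<xi>. (norm (G x \<xi> - g x))\<^sup>2 \<partial>D) \<le> \<rho>\<^sup>2"
    and \<gamma>_nonneg: "0 \<le> \<gamma>"
    and \<gamma>_le: "\<gamma> * L * real (t - 1) \<le> 1"
begin

abbreviation \<Omega> :: "(nat \<Rightarrow> 'b) measure" where
  "\<Omega> \<equiv> PiM {..<t} (\<lambda>_. D)"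

abbreviation X :: "nat \<Rightarrow> (nat \<Rightarrow> 'b) \<Rightarrow> 'a" where
  "X s w \<equiv> sgd_iter x0 \<gamma> G w s"

definition noise :: "nat \<Rightarrow> (nat \<Rightarrow> 'b) \<Rightarrow> 'a" where
  "noise s w = G (X s w) (w s) - g (X s w)"

sublocale P: product_prob_space "\<lambda>_::nat. D" "{..<t}"
  by (simp add: D product_prob_space_axioms_def product_prob_space_def product_sigma_finite_def
      prob_space_imp_sigma_finite)

lemma X_Suc: "X (Suc s) w = X s w - \<gamma> *\<^sub>R (g (X s w) + noise s w)"
  by (simp add: noise_def)

lemma x0_minus_X: "x0 - X n w = \<gamma> *\<^sub>R (\<Sum>s<n. g (X s w) + noise s w)"
proof (induction n)
  case (Suc n)
  have "x0 - X (Suc n) w = (x0 - X n w) + \<gamma> *\<^sub>R (g (X n w) + noise n w)"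
    by (simp only: X_Suc) (simp add: algebra_simps)
  with Suc.IH show ?case
    by (simp add: scaleR_right_distrib)
qed simp

lemma X_fun_upd: "s \<le> k \<Longrightarrow> X s (w(k := y)) = X s w"
  by (induction s) auto

lemma noise_fun_upd: "r < k \<Longrightarrow> noise r (w(k := y)) = noise r w"
  by (simp add: noise_def X_fun_upd)

lemma noise_fun_upd_self: "noise k (w(k := y)) = G (X k w) y - g (X k w)"
  by (simp add: noise_def X_fun_upd)

lemma g_measurable [measurable]: "g \<in> borel_measurable borel"
  using lipschitz_on_continuous_on[OF lipschitz] by (rule borel_measurable_continuous_onI)

lemma sample_gradient_measurable:
  assumes "h \<in> borel_measurable \<Omega>" and "s < t"
  shows "(\<lambda>w. G (h w) (w s)) \<in> borel_measurable \<Omega>"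
proof -
  have "(\<lambda>w. (h w, w s)) \<in> measurable \<Omega> (borel \<Otimes>\<^sub>M D)"
    using assms by (intro measurable_Pair measurable_component_singleton) auto
  from measurable_compose[OF this G_meas] show ?thesis
    by simp
qed

lemma X_measurable: "s \<le> t \<Longrightarrow> X s \<in> borel_measurable \<Omega>"
  by (induction s) (auto intro!: borel_measurable_diff borel_measurable_scaleR sample_gradient_measurable)

lemma noise_measurable: "k < t \<Longrightarrow> noise k \<in> borel_measurable \<Omega>"
  unfolding noise_def
  by (intro borel_measurable_diff sample_gradient_measurable X_measurable
      measurable_compose[OF _ g_measurable]) auto

lemma integral_PiM_coordinate:
  fixes F :: "(nat \<Rightarrow> 'b) \<Rightarrow> real"
  assumes "k < t" and "integrable \<Omega> F"
  shows "integral\<^sup>L \<Omega> F = (\<integral>w. (\<integral>y. F (w(k := y)) \<partial>D) \<partial>PiM ({..<t} - {k}) (\<lambda>_. D))"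
proof -
  have "insert k ({..<t} - {k}) = {..<t}"
    using assms(1) by auto
  then show ?thesis
    using P.product_integral_insert[of "{..<t} - {k}" k F] assms(2) by simp
qed

lemma nn_integral_norm_noise_sq_le:
  assumes k: "k < t"
  shows "(\<integral>\<^sup>+w. (norm (noise k w))\<^sup>2 \<partial>\<Omega>) \<le> ennreal (\<rho>\<^sup>2)"
proof -
  interpret Q: prob_space "PiM ({..<t} - {k}) (\<lambda>_. D)"
    by (simp add: D prob_space_PiM)
  have "insert k ({..<t} - {k}) = {..<t}"
    using k by auto
  then have "(\<integral>\<^sup>+w. (norm (noise k w))\<^sup>2 \<partial>\<Omega>)
      = (\<integral>\<^sup>+w. (\<integral>\<^sup>+y. (norm (noise k (w(k := y))))\<^sup>2 \<partial>D) \<partial>PiM ({..<t} - {k}) (\<lambda>_. D))"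
    using P.product_nn_integral_insert[of "{..<t} - {k}" k] noise_measurable[OF k] by simp
  also have "\<dots> \<le> (\<integral>\<^sup>+w. ennreal (\<rho>\<^sup>2) \<partial>PiM ({..<t} - {k}) (\<lambda>_. D))"
  proof (intro nn_integral_mono)
    fix w
    have "(\<integral>\<^sup>+y. (norm (noise k (w(k := y))))\<^sup>2 \<partial>D)
        = ennreal (\<integral>y. (norm (G (X k w) y - g (X k w)))\<^sup>2 \<partial>D)"
      unfolding noise_fun_upd_self by (rule nn_integral_eq_integral[OF var_int]) simp
    also have "\<dots> \<le> ennreal (\<rho>\<^sup>2)"
      using var_bound by (simp add: ennreal_leI)
    finally show "(\<integral>\<^sup>+y. (norm (noise k (w(k := y))))\<^sup>2 \<partial>D) \<le> ennreal (\<rho>\<^sup>2)" .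
  qed
  also have "\<dots> = ennreal (\<rho>\<^sup>2)"
    by (simp add: Q.emeasure_space_1)
  finally show ?thesis .
qed

lemma square_integrable_noise:
  assumes "k < t"
  shows "square_integrable \<Omega> (noise k)"
  unfolding square_integrable_def
proof
  show "noise k \<in> borel_measurable \<Omega>"
    using noise_measurable[OF assms] .
  show "integrable \<Omega> (\<lambda>w. (norm (noise k w))\<^sup>2)"
  proof (rule integrableI_bounded)
    show "(\<integral>\<^sup>+w. ennreal (norm ((norm (noise k w))\<^sup>2)) \<partial>\<Omega>) < \<infinity>"
      using nn_integral_norm_noise_sq_le[OF assms] by (simp add: le_less_trans)
  qed (use noise_measurable[OF assms] in measurable)
qed

lemma integral_norm_noise_sq_le:
  assumes "k < t"
  shows "(\<integral>w. (norm (noise k w))\<^sup>2 \<partial>\<Omega>) \<le> \<rho>\<^sup>2"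
proof -
  have "(\<integral>w. (norm (noise k w))\<^sup>2 \<partial>\<Omega>) = enn2real (\<integral>\<^sup>+w. (norm (noise k w))\<^sup>2 \<partial>\<Omega>)"
    using noise_measurable[OF assms] by (intro integral_eq_nn_integral) auto
  also have "\<dots> \<le> \<rho>\<^sup>2"
    using enn2real_mono[OF nn_integral_norm_noise_sq_le[OF assms]] by simp
  finally show ?thesis .
qed

lemma integral_inner_noise_eq_0:
  assumes k: "k < t" and A: "square_integrable \<Omega> A" and indep: "\<And>w y. A (w(k := y)) = A w"
  shows "(\<integral>w. A w \<bullet> noise k w \<partial>\<Omega>) = 0"
proof -
  have "(\<integral>y. A (w(k := y)) \<bullet> noise k (w(k := y)) \<partial>D) = 0" for w
  proof -
    have "(\<integral>y. A (w(k := y)) \<bullet> noise k (w(k := y)) \<partial>D)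
        = A w \<bullet> (\<integral>y. G (X k w) y - g (X k w) \<partial>D)"
      unfolding indep noise_fun_upd_self using G_int by (intro integral_inner_right) auto
    also have "(\<integral>y. G (X k w) y - g (X k w) \<partial>D) = 0"
      using G_int unbiased by (simp add: prob_space.prob_space[OF D])
    finally show ?thesis
      unfolding inner_zero_right .
  qed
  then show ?thesis
    using integral_PiM_coordinate[OF k square_integrable_inner[OF A square_integrable_noise[OF k]]]
    by simp
qed

lemma square_integrable_grad:
  "square_integrable \<Omega> h \<Longrightarrow> square_integrable \<Omega> (\<lambda>w. g (h w))"
  using P.P.square_integrable_lipschitz_comp[OF lipschitz] .

lemma square_integrable_X: "s \<le> t \<Longrightarrow> square_integrable \<Omega> (X s)"
proof (induction s)
  case 0
  show ?case
    by (simp add: square_integrable_def)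
next
  case (Suc s)
  then have "square_integrable \<Omega> (\<lambda>w. X s w - \<gamma> *\<^sub>R (g (X s w) + noise s w))"
    by (intro square_integrable_diff square_integrable_scaleR square_integrable_add
        square_integrable_grad square_integrable_noise) auto
  then show ?case
    by (simp only: X_Suc)
qed

definition noiseless_descent :: "nat \<Rightarrow> nat \<Rightarrow> (nat \<Rightarrow> 'b) \<Rightarrow> 'a" where
  "noiseless_descent r m w = ((\<lambda>z. z - \<gamma> *\<^sub>R g z) ^^ m) (X r w)"

lemma noiseless_descent_fun_upd: "r \<le> k \<Longrightarrow> noiseless_descent r m (w(k := y)) = noiseless_descent r m w"
  by (simp add: noiseless_descent_def X_fun_upd)

lemma square_integrable_noiseless_descent:
  assumes "r \<le> t"
  shows "square_integrable \<Omega> (noiseless_descent r m)"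
proof (induction m)
  case 0
  show ?case
    using square_integrable_X[OF assms] by (simp add: noiseless_descent_def)
next
  case (Suc m)
  then have "square_integrable \<Omega> (\<lambda>w. noiseless_descent r m w - \<gamma> *\<^sub>R g (noiseless_descent r m w))"
    by (intro square_integrable_diff square_integrable_scaleR square_integrable_grad)
  then show ?case
    by (simp add: noiseless_descent_def)
qed

lemma one_plus_\<gamma>L_power_le_3:
  assumes "p \<le> t - 1"
  shows "(1 + \<gamma> * L) ^ p \<le> 3"
proof (rule one_plus_power_le_3)
  show "0 \<le> \<gamma> * L"
    using lipschitz_on_nonneg[OF lipschitz] \<gamma>_nonneg by simp
  then have "real p * (\<gamma> * L) \<le> real (t - 1) * (\<gamma> * L)"
    using assms by (intro mult_right_mono) auto
  then show "real p * (\<gamma> * L) \<le> 1"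
    using \<gamma>_le by (simp add: mult.commute)
qed

lemma norm_X_minus_noiseless_descent_le:
  assumes "m \<le> t"
  shows "norm (X (r + m) w - noiseless_descent r m w) \<le> 3 * \<gamma> * (\<Sum>j<m. norm (noise (r + j) w))"
proof -
  have "norm (X (r + m) w - noiseless_descent r m w)
        \<le> \<gamma> * (\<Sum>j<m. (1 + \<gamma> * L) ^ (m - 1 - j) * norm (noise (r + j) w))"
    using perturbed_gradient_descent_dist[OF lipschitz \<gamma>_nonneg,
        of "\<lambda>k. X (r + k) w" "\<lambda>k. noise (r + k) w" m]
    by (simp only: add_Suc_right X_Suc noiseless_descent_def add_0_right)
  also have "\<dots> \<le> \<gamma> * (\<Sum>j<m. 3 * norm (noise (r + j) w))"
    using assms \<gamma>_nonneg
    by (intro mult_left_mono sum_mono mult_right_mono one_plus_\<gamma>L_power_le_3) auto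
  finally show ?thesis
    by (simp add: sum_distrib_left algebra_simps)
qed

lemma grad_diff_inner_noise_le:
  assumes "m \<le> t"
  shows "(g (X (r + m) w) - g (noiseless_descent r m w)) \<bullet> noise r w
           \<le> 3 / 2 * L * \<gamma> * (\<Sum>j<m. (norm (noise (r + j) w))\<^sup>2 + (norm (noise r w))\<^sup>2)"
proof -
  have L: "0 \<le> L"
    using lipschitz_on_nonneg[OF lipschitz] .
  have "(g (X (r + m) w) - g (noiseless_descent r m w)) \<bullet> noise r w
        \<le> norm (g (X (r + m) w) - g (noiseless_descent r m w)) * norm (noise r w)"
    by (rule real_inner_class.Cauchy_Schwarz_ineq2[THEN abs_le_D1])
  also have "\<dots> \<le> L * norm (X (r + m) w - noiseless_descent r m w) * norm (noise r w)"
    by (intro mult_right_mono lipschitz_on_normD[OF lipschitz]) auto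
  also have "\<dots> \<le> L * (3 * \<gamma> * (\<Sum>j<m. norm (noise (r + j) w))) * norm (noise r w)"
    using norm_X_minus_noiseless_descent_le[OF assms] L
    by (intro mult_right_mono mult_left_mono) auto
  also have "\<dots> = 3 / 2 * L * \<gamma> * (\<Sum>j<m. 2 * norm (noise (r + j) w) * norm (noise r w))"
    by (simp add: sum_distrib_left sum_distrib_right algebra_simps)
  also have "\<dots> \<le> 3 / 2 * L * \<gamma> * (\<Sum>j<m. (norm (noise (r + j) w))\<^sup>2 + (norm (noise r w))\<^sup>2)"
    using L \<gamma>_nonneg
    by (intro mult_left_mono sum_mono) (auto intro: sum_squares_bound)
  finally show ?thesis .
qed

lemma square_integrable_grad_diff_noiseless_descent:
  assumes "r + m \<le> t"
  shows "square_integrable \<Omega> (\<lambda>w. g (X (r + m) w) - g (noiseless_descent r m w))"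
  using assms
  by (intro square_integrable_diff square_integrable_grad square_integrable_X
      square_integrable_noiseless_descent) auto

lemma integral_grad_diff_inner_noise_le:
  assumes "r + m < t"
  shows "(\<integral>w. (g (X (r + m) w) - g (noiseless_descent r m w)) \<bullet> noise r w \<partial>\<Omega>)
           \<le> 3 * L * \<gamma> * real m * \<rho>\<^sup>2"
proof -
  have "m \<le> t"
    using assms by simp
  have sq_noise: "square_integrable \<Omega> (noise (r + j))" if "j \<le> m" for j
    using that assms by (intro square_integrable_noise) auto
  then have sq_noise_r: "square_integrable \<Omega> (noise r)"
    using sq_noise[of 0] by simp
  have int_bound: "integrable \<Omega> (\<lambda>w. 3 / 2 * L * \<gamma> * (\<Sum>j<m. (norm (noise (r + j) w))\<^sup>2 + (norm (noise r w))\<^sup>2))"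
    using sq_noise sq_noise_r unfolding square_integrable_def
    by (intro integrable_mult_right Bochner_Integration.integrable_sum Bochner_Integration.integrable_add) auto
  have "(\<integral>w. (g (X (r + m) w) - g (noiseless_descent r m w)) \<bullet> noise r w \<partial>\<Omega>)
      \<le> (\<integral>w. 3 / 2 * L * \<gamma> * (\<Sum>j<m. (norm (noise (r + j) w))\<^sup>2 + (norm (noise r w))\<^sup>2) \<partial>\<Omega>)"
    using integral_mono[OF square_integrable_inner[OF
          square_integrable_grad_diff_noiseless_descent sq_noise_r] int_bound
        grad_diff_inner_noise_le[OF \<open>m \<le> t\<close>]] assms by simp
  also have "\<dots> = 3 / 2 * L * \<gamma> * (\<Sum>j<m. (\<integral>w. (norm (noise (r + j) w))\<^sup>2 \<partial>\<Omega>) + (\<integral>w. (norm (noise r w))\<^sup>2 \<partial>\<Omega>))"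
    using sq_noise sq_noise_r
    by (simp add: square_integrable_def Bochner_Integration.integral_sum Bochner_Integration.integral_add)
  also have "\<dots> \<le> 3 / 2 * L * \<gamma> * (\<Sum>j<m. \<rho>\<^sup>2 + \<rho>\<^sup>2)"
    using assms lipschitz_on_nonneg[OF lipschitz] \<gamma>_nonneg
    by (intro mult_left_mono sum_mono add_mono integral_norm_noise_sq_le) auto
  also have "\<dots> = 3 * L * \<gamma> * real m * \<rho>\<^sup>2"
    by simp
  finally show ?thesis .
qed

lemma integral_grad_inner_noise_le:
  assumes "r + m < t"
  shows "(\<integral>w. g (X (r + m) w) \<bullet> noise r w \<partial>\<Omega>) \<le> 3 * L * \<gamma> * real m * \<rho>\<^sup>2"
proof -
  have sq_noise: "square_integrable \<Omega> (noise r)"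
    using assms by (intro square_integrable_noise) auto
  have sq_descent: "square_integrable \<Omega> (\<lambda>w. g (noiseless_descent r m w))"
    using assms by (intro square_integrable_grad square_integrable_noiseless_descent) auto
  have sq_diff: "square_integrable \<Omega> (\<lambda>w. g (X (r + m) w) - g (noiseless_descent r m w))"
    using assms by (intro square_integrable_grad_diff_noiseless_descent) auto
  have "(\<integral>w. g (X (r + m) w) \<bullet> noise r w \<partial>\<Omega>)
        = (\<integral>w. (g (X (r + m) w) - g (noiseless_descent r m w)) \<bullet> noise r w
               + g (noiseless_descent r m w) \<bullet> noise r w \<partial>\<Omega>)"
    by (simp add: inner_diff_left)
  also have "\<dots> = (\<integral>w. (g (X (r + m) w) - g (noiseless_descent r m w)) \<bullet> noise r w \<partial>\<Omega>)
          + (\<integral>w. g (noiseless_descent r m w) \<bullet> noise r w \<partial>\<Omega>)"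
    using sq_noise sq_diff sq_descent
    by (intro Bochner_Integration.integral_add square_integrable_inner)
  finally have split: "(\<integral>w. g (X (r + m) w) \<bullet> noise r w \<partial>\<Omega>)
      = (\<integral>w. (g (X (r + m) w) - g (noiseless_descent r m w)) \<bullet> noise r w \<partial>\<Omega>)
          + (\<integral>w. g (noiseless_descent r m w) \<bullet> noise r w \<partial>\<Omega>)" .
  have "(\<integral>w. g (noiseless_descent r m w) \<bullet> noise r w \<partial>\<Omega>) = 0"
    using assms sq_descent by (intro integral_inner_noise_eq_0) (auto simp: noiseless_descent_fun_upd)
  with split integral_grad_diff_inner_noise_le[OF assms] show ?thesis
    by simp
qed

lemma integral_norm_sum_noise_sq_le: "(\<integral>w. (norm (\<Sum>r<t. noise r w))\<^sup>2 \<partial>\<Omega>) \<le> real t * \<rho>\<^sup>2"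
proof -
  have "(\<integral>w. (norm (\<Sum>r<t. noise r w))\<^sup>2 \<partial>\<Omega>) = (\<Sum>r<t. \<Sum>k<t. \<integral>w. noise r w \<bullet> noise k w \<partial>\<Omega>)"
    unfolding power2_norm_eq_inner by (intro integral_inner_sum_sum square_integrable_noise) auto
  also have "\<dots> \<le> (\<Sum>r<t. \<Sum>k<t. if r = k then \<rho>\<^sup>2 else 0)"
  proof (intro sum_mono)
    fix r k
    assume "r \<in> {..<t}" "k \<in> {..<t}"
    then have "r < t" "k < t"
      by auto
    consider "r = k" | "r < k" | "k < r"
      by linarith
    then show "(\<integral>w. noise r w \<bullet> noise k w \<partial>\<Omega>) \<le> (if r = k then \<rho>\<^sup>2 else 0)"
    proof cases
      case 1
      then show ?thesis
        using integral_norm_noise_sq_le[OF \<open>r < t\<close>] by (simp add: power2_norm_eq_inner)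
    next
      case 2
      then show ?thesis
        using \<open>k < t\<close> \<open>r < t\<close>
        by (simp add: integral_inner_noise_eq_0 square_integrable_noise noise_fun_upd)
    next
      case 3
      then show ?thesis
        using \<open>k < t\<close> \<open>r < t\<close>
        by (simp add: inner_commute[of "noise r _"] integral_inner_noise_eq_0
            square_integrable_noise noise_fun_upd)
    qed
  qed
  also have "\<dots> = real t * \<rho>\<^sup>2"
    by simp
  finally show ?thesis .
qed

lemma integral_inner_sum_grad_sum_noise_le:
  "(\<integral>w. (\<Sum>s<t. g (X s w)) \<bullet> (\<Sum>r<t. noise r w) \<partial>\<Omega>)
     \<le> 3 * L * \<gamma> * \<rho>\<^sup>2 * (\<Sum>s<t. \<Sum>r<s. real (s - r))"
proof -
  have "(\<integral>w. (\<Sum>s<t. g (X s w)) \<bullet> (\<Sum>r<t. noise r w) \<partial>\<Omega>)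
        = (\<Sum>s<t. \<Sum>r<t. \<integral>w. g (X s w) \<bullet> noise r w \<partial>\<Omega>)"
    by (intro integral_inner_sum_sum square_integrable_noise square_integrable_grad square_integrable_X) auto
  also have "\<dots> \<le> (\<Sum>s<t. \<Sum>r<t. if r < s then 3 * L * \<gamma> * \<rho>\<^sup>2 * real (s - r) else 0)"
  proof (intro sum_mono)
    fix s r
    assume "s \<in> {..<t}" "r \<in> {..<t}"
    then have "s < t" "r < t"
      by auto
    show "(\<integral>w. g (X s w) \<bullet> noise r w \<partial>\<Omega>) \<le> (if r < s then 3 * L * \<gamma> * \<rho>\<^sup>2 * real (s - r) else 0)"
    proof (cases "r < s")
      case True
      then show ?thesis
        using integral_grad_inner_noise_le[of r "s - r"] \<open>s < t\<close> by (simp add: mult_ac del: of_nat_diff)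
    next
      case False
      then show ?thesis
        using \<open>s < t\<close> \<open>r < t\<close>
        by (simp add: integral_inner_noise_eq_0 square_integrable_grad square_integrable_X X_fun_upd)
    qed
  qed
  also have "\<dots> = 3 * L * \<gamma> * \<rho>\<^sup>2 * (\<Sum>s<t. \<Sum>r<s. real (s - r))"
  proof -
    have "{..<t} \<inter> {r. r < s} = {..<s}" if "s < t" for s
      using that by auto
    then show ?thesis
      by (simp add: sum.If_cases sum_distrib_left)
  qed
  finally show ?thesis .
qed

lemma sgd_displacement_bound:
  "(\<integral>w. (norm (x0 - X t w))\<^sup>2 \<partial>\<Omega>)
     \<le> \<gamma>\<^sup>2 * (\<integral>w. (norm (\<Sum>s<t. g (X s w)))\<^sup>2 \<partial>\<Omega>) + \<gamma>\<^sup>2 * real t * \<rho>\<^sup>2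
       + real (t - 1) * real t * real (t + 1) * \<gamma> ^ 3 * L * \<rho>\<^sup>2"
proof -
  define S where "S w = (\<Sum>s<t. g (X s w))" for w
  define E where "E w = (\<Sum>r<t. noise r w)" for w
  define T where "T = (\<Sum>s<t. \<Sum>r<s. real (s - r))"
  have sq_S: "square_integrable \<Omega> S"
    unfolding S_def by (intro square_integrable_sum square_integrable_grad square_integrable_X) auto
  have sq_E: "square_integrable \<Omega> E"
    unfolding E_def by (intro square_integrable_sum square_integrable_noise) auto
  have "(norm (x0 - X t w))\<^sup>2 = \<gamma>\<^sup>2 * ((norm (S w))\<^sup>2 + 2 * (S w \<bullet> E w) + (norm (E w))\<^sup>2)" for w
  proof -
    have "x0 - X t w = \<gamma> *\<^sub>R (S w + E w)"
      unfolding x0_minus_X S_def E_def by (simp add: sum.distrib)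
    then show ?thesis
      using dot_norm[of "S w" "E w"] by (simp add: power_mult_distrib)
  qed
  then have "(\<integral>w. (norm (x0 - X t w))\<^sup>2 \<partial>\<Omega>)
      = \<gamma>\<^sup>2 * ((\<integral>w. (norm (S w))\<^sup>2 \<partial>\<Omega>) + 2 * (\<integral>w. S w \<bullet> E w \<partial>\<Omega>) + (\<integral>w. (norm (E w))\<^sup>2 \<partial>\<Omega>))"
    using sq_S sq_E square_integrable_inner[OF sq_S sq_E] unfolding square_integrable_def
    by (simp add: Bochner_Integration.integral_add Bochner_Integration.integrable_add)
  also have "\<dots> \<le> \<gamma>\<^sup>2 * ((\<integral>w. (norm (S w))\<^sup>2 \<partial>\<Omega>) + 2 * (3 * L * \<gamma> * \<rho>\<^sup>2 * T) + real t * \<rho>\<^sup>2)"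
    using integral_inner_sum_grad_sum_noise_le integral_norm_sum_noise_sq_le
    by (intro mult_left_mono add_mono) (auto simp: S_def E_def T_def)
  also have "\<dots> = \<gamma>\<^sup>2 * (\<integral>w. (norm (S w))\<^sup>2 \<partial>\<Omega>) + \<gamma>\<^sup>2 * real t * \<rho>\<^sup>2 + (6 * T) * \<gamma> ^ 3 * L * \<rho>\<^sup>2"
    by (simp add: algebra_simps power2_eq_square power3_eq_cube)
  also have "6 * T = real (t - 1) * real t * real (t + 1)"
    unfolding T_def sum_sum_lessThan_diff_eq by (cases t) auto
  finally show ?thesis
    by (simp add: S_def)
qed

end

theorem lemma8:
  fixes f :: "'a::euclidean_space \<Rightarrow> real" and g :: "'a \<Rightarrow> 'a"
    and D :: "'b measure" and G :: "'a \<Rightarrow> 'b \<Rightarrow> 'a"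
    and L \<rho> \<gamma> :: real and t :: nat and x0 :: 'a
  assumes smooth: "L_smooth L f g"
    and D: "prob_space D"
    and G_meas: "(\<lambda>(x, \<xi>). G x \<xi>) \<in> borel_measurable (borel \<Otimes>\<^sub>M D)"
    and G_int: "\<And>x. integrable D (G x)"
    and unbiased: "\<And>x. (\<integral>\<xi>. G x \<xi> \<partial>D) = g x"
    and var_int: "\<And>x. integrable D (\<lambda>\<xi>. (norm (G x \<xi> - g x))\<^sup>2)"
    and var_bound: "\<And>x. (\<integral>\<xi>. (norm (G x \<xi> - g x))\<^sup>2 \<partial>D) \<le> \<rho>\<^sup>2"
    and t: "t \<ge> 1"
    and \<gamma>_pos: "\<gamma> > 0"
    and \<gamma>_le: "\<gamma> * L * real (t - 1) \<le> 1"
  shows "(\<integral>\<omega>. (norm (x0 - sgd_iter x0 \<gamma> G \<omega> t))\<^sup>2 \<partial>(PiM {..<t} (\<lambda>_. D)))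
         \<le> \<gamma>\<^sup>2 * (\<integral>\<omega>. (norm (\<Sum>s<t. g (sgd_iter x0 \<gamma> G \<omega> s)))\<^sup>2 \<partial>(PiM {..<t} (\<lambda>_. D)))
           + \<gamma>\<^sup>2 * real t * \<rho>\<^sup>2
           + real (t - 1) * real t * real (t + 1) * \<gamma> ^ 3 * L * \<rho>\<^sup>2"
proof -
  interpret sgd_setting g D G L \<rho> \<gamma> t x0
    using \<gamma>_pos
    by (intro sgd_setting.intro L_smooth_lipschitz[OF smooth] D G_meas G_int unbiased var_int
        var_bound \<gamma>_le) simp
  show ?thesis
    by (rule sgd_displacement_bound)
qed

end
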